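(* Given integers $t,q\geqslant1$, there is a constant $C>0$ such that \[\frac{\sigma(n)}{n\log\log n}\geqslant C\] for infinitely many positive integers $n$ with $n\equiv t\pmod q$.
   Context: $\sigma(n)$ denotes the sum of the positive divisors of $n$. *)

theory Defs
  imports "HOL-Number_Theory.Number_Theory"
begin

definition divisor_sigma :: "nat \<Rightarrow> nat" where
  "divisor_sigma n = (\<Sum>d \<in> {d. d dvd n}. d)"

end

theory Submission
  imports Defs "HOL-Analysis.Harmonic_Numbers"
begin

text \<open>
  Take \<open>n = t \<cdot> (\<Prod>j<m. 1 + j q)\<close>. Then \<open>n \<equiv> t (mod q)\<close>, and the divisors
  \<open>1 + j q\<close> of \<open>n\<close> have the distinct codivisors \<open>n / (1 + j q) \<ge> n / (q (j + 1))\<close>, so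
  \<open>\<sigma>(n) \<ge> (n / q) H\<^sub>m \<ge> (n / q) ln m\<close>. On the other hand \<open>n \<le> m\<^sup>4\<^sup>m\<close>, whence
  \<open>ln ln n \<le> ln (4 m\<^sup>2) \<le> 3 ln m\<close>, and so \<open>\<sigma>(n) / (n ln ln n) \<ge> 1 / (3 q)\<close>
  for every \<open>m \<ge> max 4 t q\<close>; these \<open>n\<close> grow with \<open>m\<close>.
\<close>

lemma sum_codivisors_le_divisor_sigma:
  fixes n :: nat
  assumes "n > 0" and "\<And>d. d \<in> D \<Longrightarrow> d dvd n"
  shows "(\<Sum>d\<in>D. n div d) \<le> divisor_sigma n"
proof -
  have "inj_on (\<lambda>d. n div d) D"
  proof (rule inj_onI)
    fix d e assume "d \<in> D" "e \<in> D" and eq: "n div d = n div e"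
    have "d * (n div d) = n" "e * (n div e) = n"
      using assms(2)[OF \<open>d \<in> D\<close>] assms(2)[OF \<open>e \<in> D\<close>] by simp_all
    then show "d = e"
      using \<open>n > 0\<close> eq by (metis mult_right_cancel mult_0_right neq0_conv)
  qed
  then have "(\<Sum>d\<in>D. n div d) = sum id ((\<lambda>d. n div d) ` D)"
    by (simp add: sum.reindex)
  also have "\<dots> \<le> sum id {d. d dvd n}"
    using assms by (intro sum_mono2) (auto, metis dvd_mult_div_cancel dvd_triv_right)
  finally show ?thesis
    by (simp add: divisor_sigma_def)
qed

lemma divisor_sigma_ge_harm:
  fixes n q m :: nat
  assumes "n > 0" and "q \<ge> 1" and dvd: "\<And>j. j < m \<Longrightarrow> 1 + j * q dvd n"
  shows "real n / real q * harm m \<le> real (divisor_sigma n)"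
proof -
  have inj: "inj_on (\<lambda>j. 1 + j * q) {..<m}"
    using \<open>q \<ge> 1\<close> by (intro inj_onI) simp
  have "real n / real q * harm m = (\<Sum>j<m. real n / (real q * (real j + 1)))"
    by (simp add: harm_altdef sum_distrib_left field_simps)
  also have "\<dots> \<le> (\<Sum>j<m. real n / (1 + real j * real q))"
  proof (intro sum_mono divide_left_mono)
    fix j
    show "1 + real j * real q \<le> real q * (real j + 1)"
      using \<open>q \<ge> 1\<close> by (simp add: algebra_simps)
    show "0 < real q * (real j + 1) * (1 + real j * real q)"
      using \<open>q \<ge> 1\<close> by (simp add: zero_less_mult_iff add_pos_nonneg)
  qed simp
  also have "\<dots> = real (\<Sum>j<m. n div (1 + j * q))"
    unfolding of_nat_sum
  proof (intro sum.cong refl)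
    fix j assume "j \<in> {..<m}"
    then have "1 + j * q dvd n"
      using dvd by simp
    then show "real n / (1 + real j * real q) = real (n div (1 + j * q))"
      using real_of_nat_div by simp
  qed
  also have "(\<Sum>j<m. n div (1 + j * q)) = (\<Sum>d\<in>(\<lambda>j. 1 + j * q) ` {..<m}. n div d)"
    by (simp only: sum.reindex[OF inj] comp_def)
  also have "\<dots> \<le> divisor_sigma n"
    using \<open>n > 0\<close> dvd by (intro sum_codivisors_le_divisor_sigma) auto
  finally show ?thesis
    by simp
qed

lemma ln_ln_le_three_ln:
  fixes n m :: nat
  assumes "4 \<le> m" and "2 \<le> n" and "n \<le> m ^ (4 * m)"
  shows "ln (ln (real n)) \<le> 3 * ln (real m)"
proof -
  have "ln (real n) \<le> ln (real m ^ (4 * m))"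
    using assms by (intro ln_mono) (simp_all add: of_nat_power[symmetric] del: of_nat_power)
  also have "\<dots> = 4 * real m * ln (real m)"
    using assms by (simp add: ln_realpow)
  also have "\<dots> \<le> 4 * real m ^ 2"
    using assms ln_le_minus_one[of "real m"] by (simp add: power2_eq_square)
  finally have "ln (ln (real n)) \<le> ln (4 * real m ^ 2)"
    using assms by (intro ln_mono) simp_all
  also have "\<dots> = ln 4 + 2 * ln (real m)"
    using assms by (simp add: ln_mult ln_realpow)
  also have "\<dots> \<le> 3 * ln (real m)"
    using assms by simp
  finally show ?thesis .
qed

definition progression_prod :: "nat \<Rightarrow> nat \<Rightarrow> nat" where
  "progression_prod q m = (\<Prod>j<m. 1 + j * q)"

lemma progression_prod_cong_one: "[progression_prod q m = 1] (mod q)"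
proof -
  have "[progression_prod q m = (\<Prod>j<m. 1)] (mod q)"
    unfolding progression_prod_def cong_def by (intro cong_prod[unfolded cong_def]) (metis mod_mult_self1)
  then show ?thesis
    by simp
qed

lemma dvd_progression_prod: "j < m \<Longrightarrow> 1 + j * q dvd progression_prod q m"
  unfolding progression_prod_def by (intro dvd_prodI) simp_all

lemma progression_prod_ge:
  assumes "q \<ge> 1" and "m \<ge> 1"
  shows "m \<le> progression_prod q m"
proof -
  have "m \<le> 1 + (m - 1) * q"
    using assms mult_le_mono2[of 1 q "m - 1"] by linarith
  also have "\<dots> \<le> progression_prod q m"
    using dvd_progression_prod[of "m - 1" m q] assms
    by (intro dvd_imp_le) (simp_all add: progression_prod_def)
  finally show ?thesis .
qed

lemma progression_prod_le:
  assumes "q \<le> m" and "m \<ge> 2"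
  shows "progression_prod q m \<le> m ^ (3 * m)"
proof -
  have "1 + j * q \<le> m ^ 3" if "j < m" for j
  proof -
    have "1 + j * q \<le> 1 + m * m"
      using that assms by (intro add_left_mono mult_mono) auto
    also have "\<dots> \<le> m * m * m"
    proof -
      have "m * m * 2 \<le> m * m * m"
        using assms by (intro mult_le_mono2) simp
      moreover have "1 \<le> m * m"
        using assms by simp
      ultimately show ?thesis
        by linarith
    qed
    finally show ?thesis
      by (simp add: power3_eq_cube)
  qed
  then have "progression_prod q m \<le> (m ^ 3) ^ m"
    using assms unfolding progression_prod_def by (intro prod_le_power) auto
  then show ?thesis
    by (simp add: power_mult)
qed

lemma le_mult_progression_prod:
  fixes t q m :: nat
  assumes "1 \<le> t" "1 \<le> q" "1 \<le> m"
  shows "m \<le> t * progression_prod q m"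
proof -
  have "m \<le> progression_prod q m"
    using assms by (intro progression_prod_ge)
  also have "\<dots> \<le> t * progression_prod q m"
    using assms by simp
  finally show ?thesis .
qed

lemma divisor_sigma_ratio_ge:
  fixes t q m :: nat
  assumes "1 \<le> t" "t \<le> m" "1 \<le> q" "q \<le> m" "4 \<le> m"
  defines "n \<equiv> t * progression_prod q m"
  shows "1 / (3 * real q) \<le> real (divisor_sigma n) / (real n * ln (ln (real n)))"
proof -
  have "m \<le> n"
    unfolding n_def using assms by (intro le_mult_progression_prod) simp_all
  have "n \<le> m * m ^ (3 * m)"
    unfolding n_def using assms progression_prod_le[of q m] by (intro mult_mono) simp_all
  also have "\<dots> = m ^ Suc (3 * m)"
    by simp
  also have "\<dots> \<le> m ^ (4 * m)"
    using assms by (intro power_increasing) simp_all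
  finally have lnln_le: "ln (ln (real n)) \<le> 3 * ln (real m)"
    using \<open>m \<le> n\<close> assms by (intro ln_ln_le_three_ln) simp_all
  have "exp 1 < real n"
    using exp_le \<open>m \<le> n\<close> assms by linarith
  then have "ln (exp 1) < ln (real n)"
    using \<open>m \<le> n\<close> assms(5) by (intro ln_less_cancel_iff[THEN iffD2]) simp_all
  then have "1 < ln (real n)"
    by simp
  then have lnln_pos: "0 < ln (ln (real n))"
    by simp
  have "ln (real m) \<le> ln (real m + 1)"
    using assms(5) by simp
  then have "ln (real m) \<le> harm m"
    using ln_le_harm[of m] by linarith
  then have "real n / real q * ln (real m) \<le> real n / real q * harm m"
    by (intro mult_left_mono) simp_all
  also have "\<dots> \<le> real (divisor_sigma n)"
  proof (rule divisor_sigma_ge_harm)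
    show "0 < n"
      using \<open>m \<le> n\<close> assms(5) by linarith
    show "1 + j * q dvd n" if "j < m" for j
      unfolding n_def using that by (intro dvd_mult dvd_progression_prod)
  qed (use assms(3) in simp)
  finally have sigma_ge: "real n * (3 * ln (real m)) / (3 * real q) \<le> real (divisor_sigma n)"
    by simp
  have "real n * ln (ln (real n)) / (3 * real q) \<le> real n * (3 * ln (real m)) / (3 * real q)"
    using lnln_le by (intro divide_right_mono mult_left_mono) simp_all
  with sigma_ge have "real n * ln (ln (real n)) / (3 * real q) \<le> real (divisor_sigma n)"
    by linarith
  then show ?thesis
    using lnln_pos \<open>m \<le> n\<close> assms(3,5) by (simp add: field_simps)
qed

theorem lemma5p7:
  fixes t q :: nat
  assumes "t \<ge> 1" and "q \<ge> 1"
  shows "\<exists>C::real. C > 0 \<and>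
    infinite {n::nat. n > 0 \<and> [n = t] (mod q) \<and>
      real (divisor_sigma n) / (real n * ln (ln (real n))) \<ge> C}"
proof (intro exI conjI)
  show "1 / (3 * real q) > 0"
    using assms by simp
  show "infinite {n. n > 0 \<and> [n = t] (mod q) \<and>
      real (divisor_sigma n) / (real n * ln (ln (real n))) \<ge> 1 / (3 * real q)}"
    unfolding infinite_nat_iff_unbounded_le
  proof
    fix N
    define m where "m = max (max 4 N) (max t q)"
    define n where "n = t * progression_prod q m"
    have "m \<le> n"
      unfolding n_def using assms by (intro le_mult_progression_prod) (simp_all add: m_def)
    then have "N \<le> n" "n > 0"
      by (simp_all add: m_def)
    moreover have "[n = t] (mod q)"
      using cong_scalar_left[OF progression_prod_cong_one, of t q m] by (simp add: n_def)
    moreover have "1 / (3 * real q) \<le> real (divisor_sigma n) / (real n * ln (ln (real n)))"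
      unfolding n_def using assms by (intro divisor_sigma_ratio_ge) (simp_all add: m_def)
    ultimately show "\<exists>n\<ge>N. n \<in> {n. n > 0 \<and> [n = t] (mod q) \<and>
      real (divisor_sigma n) / (real n * ln (ln (real n))) \<ge> 1 / (3 * real q)}"
      by blast
  qed
qed

end
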